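(* Let $q$ be a prime power, let $\lambda \in \mathbb{F}_{q^n}\setminus\mathbb{F}_q$, $t = [\mathbb{F}_q(\lambda):\mathbb{F}_q]$, let $\overline{S}$ be an $\mathbb{F}_{q^t}$-subspace of $\mathbb{F}_{q^n}$ of $\mathbb{F}_{q^t}$-dimension $l>0$, $b \in \mathbb{F}_{q^n}^*$ with $\mathbb{F}_{q^t}\cap b\overline{S}=\{0\}$, $0<m<t$, $k = tl+m$ with $t+1 \le k \le n$, and $S = \overline{S} \oplus b\langle 1, \lambda, \ldots, \lambda^{m-1}\rangle_{\mathbb{F}_q}$, with $Y=\langle S\rangle_{\mathbb{F}_{q^t}} = \mathbb{F}_{q^n}$ and $2m \ge t-1$. If $\mathrm{Orb}(S)$ is an $r$-FWS code with $r = 2m+t(l-1)$, then $H(\overline{S}) = \mathbb{F}_{q^t}$.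
   Context: $\mathrm{Orb}(S)=\{\alpha S:\alpha\in\mathbb{F}_{q^n}^*\}$. For an $\mathbb{F}_q$-subspace $V$ of $\mathbb{F}_{q^n}$, the stabilizer is $H(V) = \{x \in \mathbb{F}_{q^n}^* : xV = V\} \cup \{0\}$ (a subfield of $\mathbb{F}_{q^n}$). With $d(U,V)=2k-2\dim_{\mathbb{F}_q}(U\cap V)$ and $\omega_{2i}(\mathrm{Orb}(S))=|\{\alpha S: d(S,\alpha S)=2i\}|$ for $i=1,\dots,k$, $\mathrm{Orb}(S)$ is an $r$-FWS code if $\omega_{2i}=0$ for the last $r$ indices $i=k-r+1,\ldots,k$ and $\omega_{2i}\neq 0$ for all $i=1,\ldots,k-r$. $\langle S\rangle_{\mathbb{F}_{q^t}}$ denotes the $\mathbb{F}_{q^t}$-span of $S$. *)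

theory Defs
  imports Main "HOL-Computational_Algebra.Primes"
begin

text \<open>All objects live inside a finite field 'a, playing the role of F_{q^n}.
The subfield F_{q^s} is the set of roots of X^(q^s) - X.\<close>

definition Fqs :: "nat \<Rightarrow> nat \<Rightarrow> 'a::{field,finite} set" where
  "Fqs q s = {x. x ^ (q ^ s) = x}"

definition is_subfield :: "'a::field set \<Rightarrow> bool" where
  "is_subfield K \<longleftrightarrow> 0 \<in> K \<and> 1 \<in> K \<and> (\<forall>x\<in>K. \<forall>y\<in>K. x + y \<in> K \<and> x * y \<in> K)
     \<and> (\<forall>x\<in>K. - x \<in> K \<and> inverse x \<in> K)"

definition adjoin :: "'a::field set \<Rightarrow> 'a \<Rightarrow> 'a set" where
  "adjoin K a = \<Inter>{L. is_subfield L \<and> K \<subseteq> L \<and> a \<in> L}"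

definition is_subspace :: "'a::field set \<Rightarrow> 'a set \<Rightarrow> bool" where
  "is_subspace K V \<longleftrightarrow> 0 \<in> V \<and> (\<forall>x\<in>V. \<forall>y\<in>V. x + y \<in> V) \<and> (\<forall>c\<in>K. \<forall>x\<in>V. c * x \<in> V)"

definition span_list :: "'a::field set \<Rightarrow> 'a list \<Rightarrow> 'a set" where
  "span_list K xs = {\<Sum>i<length xs. c i * xs ! i | c. \<forall>i<length xs. c i \<in> K}"

definition indep_list :: "'a::field set \<Rightarrow> 'a list \<Rightarrow> bool" where
  "indep_list K xs \<longleftrightarrow> (\<forall>c. (\<forall>i<length xs. c i \<in> K) \<longrightarrow>
      (\<Sum>i<length xs. c i * xs ! i) = 0 \<longrightarrow> (\<forall>i<length xs. c i = 0))"

definition has_dim :: "'a::field set \<Rightarrow> 'a set \<Rightarrow> nat \<Rightarrow> bool" where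
  "has_dim K V d \<longleftrightarrow> (\<exists>xs. length xs = d \<and> indep_list K xs \<and> span_list K xs = V)"

definition dimK :: "'a::field set \<Rightarrow> 'a set \<Rightarrow> nat" where
  "dimK K V = (THE d. has_dim K V d)"

definition span_set :: "'a::field set \<Rightarrow> 'a set \<Rightarrow> 'a set" where
  "span_set K A = \<Inter>{V. is_subspace K V \<and> A \<subseteq> V}"

definition scale_set :: "'a::field \<Rightarrow> 'a set \<Rightarrow> 'a set" where
  "scale_set a V = (\<lambda>x. a * x) ` V"

definition set_plus :: "'a::field set \<Rightarrow> 'a set \<Rightarrow> 'a set" where
  "set_plus U V = {u + v | u v. u \<in> U \<and> v \<in> V}"

definition stab :: "'a::field set \<Rightarrow> 'a set" where
  "stab V = {x. x \<noteq> 0 \<and> scale_set x V = V} \<union> {0}"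

definition Orb :: "'a::field set \<Rightarrow> 'a set set" where
  "Orb S = {scale_set a S | a. a \<noteq> 0}"

text \<open>Subspace distance with k = dim_{F_q} S (the common dimension in the orbit).\<close>
definition subsp_dist :: "'a::field set \<Rightarrow> nat \<Rightarrow> 'a set \<Rightarrow> 'a set \<Rightarrow> nat" where
  "subsp_dist Fq k U V = 2 * k - 2 * dimK Fq (U \<inter> V)"

definition weight :: "'a::field set \<Rightarrow> 'a set \<Rightarrow> nat \<Rightarrow> nat" where
  "weight Fq S i = card {T \<in> Orb S. subsp_dist Fq (dimK Fq S) S T = 2 * i}"

definition is_FWS :: "'a::field set \<Rightarrow> nat \<Rightarrow> 'a set \<Rightarrow> bool" where
  "is_FWS Fq r S \<longleftrightarrow> (let k = dimK Fq S in
     (\<forall>i\<in>{k - r + 1..k}. weight Fq S i = 0) \<and> (\<forall>i\<in>{1..k - r}. weight Fq S i \<noteq> 0))"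

end

theory Submission
  imports Defs "HOL-Number_Theory.Residues" "HOL-Computational_Algebra.Polynomial"
begin

text \<open>Since \<open>t\<close> is the degree of \<open>\<lambda>\<close> over \<open>F_q\<close>, all powers of \<open>\<lambda>\<close> lie in \<open>F_{q^t}\<close>,
  so \<open>Y = \<langle>S\<rangle>_{F_{q^t}}\<close> is contained in \<open>Sbar + b F_{q^t}\<close>. As \<open>Y\<close> is the whole field
  and \<open>b \<notin> Sbar\<close> (because \<open>1 = \<lambda>\<^sup>0\<close> and the sum defining \<open>S\<close> is direct), \<open>b F_{q^t}\<close>
  is a complement of \<open>Sbar\<close>. The stabiliser \<open>H(Sbar)\<close> contains \<open>F_{q^t}\<close>, and sending \<open>h\<close>
  to the \<open>b F_{q^t}\<close>-coordinate of \<open>hb\<close> embeds it into \<open>F_{q^t}\<close>; hence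
  \<open>H(Sbar) = F_{q^t}\<close>.\<close>

section \<open>Subfields of a finite field\<close>

lemma subfield_uminus: "is_subfield K \<Longrightarrow> x \<in> K \<Longrightarrow> - x \<in> K"
  unfolding is_subfield_def by blast

lemma subfield_diff: "is_subfield K \<Longrightarrow> x \<in> K \<Longrightarrow> y \<in> K \<Longrightarrow> x - y \<in> K"
  unfolding is_subfield_def by (metis diff_conv_add_uminus)

lemma subfield_divide: "is_subfield K \<Longrightarrow> x \<in> K \<Longrightarrow> y \<in> K \<Longrightarrow> x / y \<in> K"
  unfolding is_subfield_def by (metis divide_inverse)

lemma subfield_power: "is_subfield K \<Longrightarrow> x \<in> K \<Longrightarrow> x ^ i \<in> K"
  by (induction i) (auto simp: is_subfield_def)

lemma subfield_is_subspace: "is_subfield K \<Longrightarrow> F \<subseteq> K \<Longrightarrow> is_subspace F K"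
  unfolding is_subfield_def is_subspace_def by blast

lemma subspace_diff:
  assumes "is_subfield K" "is_subspace K V" "x \<in> V" "y \<in> V"
  shows "x - y \<in> V"
proof -
  have "- 1 \<in> K"
    using assms(1) by (auto simp: is_subfield_def)
  then have "- y \<in> V"
    using assms(2,4) unfolding is_subspace_def by (metis mult_minus1)
  then show ?thesis
    using assms(2,3) unfolding is_subspace_def by (metis diff_conv_add_uminus)
qed

lemma sum_in_additive_set:
  assumes "0 \<in> V" "\<And>x y. x \<in> V \<Longrightarrow> y \<in> V \<Longrightarrow> x + y \<in> V" "\<And>i. i \<in> A \<Longrightarrow> f i \<in> V"
  shows "sum f A \<in> V"
  using assms(3) by (induction A rule: infinite_finite_induct) (auto intro: assms(1,2))

lemma subfield_power_card:
  fixes K :: "'a::{field,finite} set"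
  assumes K: "is_subfield K" and x: "x \<in> K"
  shows "x ^ card K = x"
proof (cases "x = 0")
  case True
  have "card K > 0"
    using K by (auto simp: is_subfield_def card_gt_0_iff)
  then show ?thesis
    using True by simp
next
  case False
  have "(\<Prod>y\<in>K-{0}. x * y) = (\<Prod>y\<in>K-{0}. y)"
    by (rule prod.reindex_bij_witness[of _ "\<lambda>y. y / x" "\<lambda>y. x * y"])
       (use K x False in \<open>auto simp: is_subfield_def divide_inverse\<close>)
  then have "x ^ card (K - {0}) = 1"
    by (simp add: prod.distrib)
  moreover have "card K = Suc (card (K - {0}))"
    using K card_Suc_Diff1[of K 0] by (simp add: is_subfield_def)
  ultimately show ?thesis
    by simp
qed

section \<open>The subfields \<open>F_{q^s}\<close>\<close>

lemma CHAR_eq_of_card_prime_power: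
  assumes "prime p" "0 < N" "card (UNIV :: 'a::{field,finite} set) = p ^ N"
  shows "CHAR('a) = p"
proof -
  have prime_char: "prime CHAR('a)"
    by (rule prime_CHAR_semidom, rule finite_imp_CHAR_pos) simp
  then have "CHAR('a) dvd p"
    using CHAR_dvd_CARD[where ?'a = 'a] assms(3) prime_dvd_power by metis
  then show ?thesis
    using prime_char assms(1) primes_dvd_imp_eq by blast
qed

lemma Fqs_subfield:
  assumes "prime CHAR('a::{field,finite})" "q = CHAR('a) ^ e"
  shows "is_subfield (Fqs q s :: 'a set)"
proof -
  have frobenius_add: "(x + y) ^ (q ^ s) = x ^ (q ^ s) + y ^ (q ^ s)" for x y :: 'a
    by (rule freshmans_dream') (use assms in \<open>simp_all add: power_mult[symmetric]\<close>)
  have pos: "0 < q ^ s"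
    using assms prime_gt_0_nat by simp
  have frobenius_neg: "(- x) ^ (q ^ s) = - (x ^ (q ^ s))" for x :: 'a
  proof -
    have "x ^ (q ^ s) + (- x) ^ (q ^ s) = 0"
      using frobenius_add[of x "- x"] zero_power[OF pos] by (metis add.right_inverse)
    then show ?thesis
      by (simp add: eq_neg_iff_add_eq_0 add.commute)
  qed
  show ?thesis
    unfolding is_subfield_def Fqs_def
    using pos by (auto simp: frobenius_add frobenius_neg power_mult_distrib power_inverse)
qed

lemma Fqs_1_subset: "Fqs q 1 \<subseteq> Fqs q s"
proof
  fix x :: 'a assume x: "x \<in> Fqs q 1"
  have "x ^ (q ^ s) = x" for s
    using x by (induction s) (simp_all add: Fqs_def power_mult)
  then show "x \<in> Fqs q s"
    by (simp add: Fqs_def)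
qed

lemma geometric_sum_nat: "(q - 1) * (\<Sum>j<n. q ^ j) + 1 = (q::nat) ^ n" if "1 \<le> q"
proof (induction n)
  case (Suc n)
  have "(q - 1) * (\<Sum>j<Suc n. q ^ j) + 1 = ((q - 1) * (\<Sum>j<n. q ^ j) + 1) + (q - 1) * q ^ n"
    by (simp add: algebra_simps)
  also have "\<dots> = q ^ Suc n"
    using Suc that by (cases q) simp_all
  finally show ?case .
qed simp

lemma card_power_fixed_le:
  assumes "2 \<le> q"
  shows "card {x::'a::idom. x ^ q = x} \<le> q"
proof -
  define P :: "'a poly" where "P = monom 1 q - monom 1 1"
  have "coeff P q = 1"
    using assms by (simp add: P_def)
  then have "P \<noteq> 0"
    by auto
  moreover have "degree P \<le> q"
    unfolding P_def using assms
    by (intro order.trans[OF degree_diff_le_max]) (auto intro: order.trans[OF degree_monom_le])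
  moreover have "{x. x ^ q = x} = {x. poly P x = 0}"
    by (simp add: P_def poly_monom)
  ultimately show ?thesis
    using card_poly_roots_bound[of P] by simp
qed

text \<open>Writing \<open>q^n - 1 = (q - 1) M\<close>, every \<open>x\<close> with \<open>x^q \<noteq> x\<close> is a root of
  \<open>1 + y + \<dots> + y^(M-1)\<close> with \<open>y = x^(q-1) \<noteq> 1\<close>, since \<open>y^M = 1\<close>.\<close>
lemma card_power_unfixed_le:
  assumes "2 \<le> q" "0 < n" "card (UNIV :: 'a::{field,finite} set) = q ^ n"
  shows "card {x::'a. x ^ q \<noteq> x} + q \<le> q ^ n"
proof -
  define M where "M = (\<Sum>j<n. q ^ j)"
  have geo: "(q - 1) * M + 1 = q ^ n"
    unfolding M_def using geometric_sum_nat assms(1) by simp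
  have "M \<noteq> 0"
  proof
    assume "M = 0"
    then have "q ^ n = 1"
      using geo by simp
    then show False
      using assms(1,2) by simp
  qed
  define h :: "'a poly" where "h = (\<Sum>j<M. monom 1 ((q - 1) * j))"
  have poly_h: "poly h x = (\<Sum>j<M. (x ^ (q - 1)) ^ j)" for x
    by (simp add: h_def poly_sum poly_monom power_mult)
  have "(0::'a) ^ (q - 1) = 0"
    using assms(1) by simp
  then have "poly h 0 = 1"
    unfolding poly_h using \<open>M \<noteq> 0\<close> by (simp add: power_0_left)
  then have "h \<noteq> 0"
    by auto
  have deg_h: "degree h \<le> (q - 1) * (M - 1)"
    unfolding h_def by (rule degree_sum_le) (auto intro!: order.trans[OF degree_monom_le])
  have "{x. x ^ q \<noteq> x} \<subseteq> {x. poly h x = 0}"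
  proof safe
    fix x :: 'a assume nx: "x ^ q \<noteq> x"
    then have "x \<noteq> 0"
      using assms(1) by (auto simp: power_0_left)
    have "x * (x ^ (q - 1)) ^ M = x * 1"
      using subfield_power_card[of UNIV x] geo assms(3)
      by (simp add: is_subfield_def power_mult[symmetric] flip: power_Suc)
    then have "(x ^ (q - 1)) ^ M = 1"
      using \<open>x \<noteq> 0\<close> by simp
    moreover have "x ^ (q - 1) \<noteq> 1"
      using nx assms(1) power_minus_mult[of q x] by auto
    ultimately show "poly h x = 0"
      unfolding poly_h using power_diff_1_eq[of "x ^ (q - 1)" M] by simp
  qed
  then have "card {x::'a. x ^ q \<noteq> x} \<le> (q - 1) * (M - 1)"
    using card_poly_roots_bound[OF \<open>h \<noteq> 0\<close>] deg_h by (meson card_mono finite le_trans)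
  moreover have "(q - 1) * (M - 1) + q = q ^ n"
    using geo \<open>M \<noteq> 0\<close> assms(1) by (cases M; cases q) (simp_all add: algebra_simps)
  ultimately show ?thesis
    by linarith
qed

lemma card_Fqs_1:
  assumes "2 \<le> q" "0 < n" "card (UNIV :: 'a::{field,finite} set) = q ^ n"
  shows "card (Fqs q 1 :: 'a set) = q"
proof -
  have "{x::'a. x ^ q \<noteq> x} = UNIV - {x. x ^ q = x}"
    by auto
  then have "card {x::'a. x ^ q \<noteq> x} = q ^ n - card {x::'a. x ^ q = x}"
    using assms(3) by (simp add: card_Diff_subset)
  then have "card {x::'a. x ^ q = x} = q"
    using card_power_fixed_le[OF assms(1), where ?'a = 'a] card_power_unfixed_le[OF assms]
    by linarith
  then show ?thesis
    by (simp add: Fqs_def)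
qed

section \<open>Spans and dimension\<close>

lemma span_list_subset:
  assumes V: "is_subspace F V" and xs: "set xs \<subseteq> V"
  shows "span_list F xs \<subseteq> V"
proof
  fix v assume "v \<in> span_list F xs"
  then obtain c where c: "\<forall>i<length xs. c i \<in> F" and v: "v = (\<Sum>i<length xs. c i * xs ! i)"
    unfolding span_list_def by blast
  have "xs ! i \<in> V" if "i < length xs" for i
    using xs that by auto
  then show "v \<in> V"
    unfolding v using V c by (intro sum_in_additive_set) (auto simp: is_subspace_def)
qed

lemma nth_in_span_list:
  assumes "is_subfield F" "i < length xs"
  shows "xs ! i \<in> span_list F xs"
proof -
  have "(\<Sum>j<length xs. (if j = i then 1 else 0) * xs ! j) = (\<Sum>j<length xs. if j = i then xs ! i else 0)"
    by (rule sum.cong) auto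
  also have "\<dots> = xs ! i"
    using assms(2) by simp
  finally have "(\<Sum>j<length xs. (if j = i then 1 else 0) * xs ! j) = xs ! i" .
  then show ?thesis
    using assms(1) unfolding span_list_def is_subfield_def
    by (intro CollectI exI[of _ "\<lambda>j. if j = i then 1 else 0"]) auto
qed

lemma span_list_snoc_mono:
  assumes "0 \<in> F"
  shows "span_list F xs \<subseteq> span_list F (xs @ [v])"
proof
  fix w assume "w \<in> span_list F xs"
  then obtain c where c: "\<forall>i<length xs. c i \<in> F" and w: "w = (\<Sum>i<length xs. c i * xs ! i)"
    unfolding span_list_def by blast
  have "(\<Sum>i<length (xs @ [v]). (c(length xs := 0)) i * (xs @ [v]) ! i) = w"
    unfolding w by (auto simp: nth_append intro: sum.cong)
  then show "w \<in> span_list F (xs @ [v])"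
    unfolding span_list_def using c assms
    by (intro CollectI exI[of _ "c(length xs := 0)"]) (auto simp: less_Suc_eq)
qed

lemma indep_list_snoc:
  assumes F: "is_subfield F" and ind: "indep_list F xs" and v: "v \<notin> span_list F xs"
  shows "indep_list F (xs @ [v])"
  unfolding indep_list_def
proof (rule allI, intro impI)
  fix c assume cF: "\<forall>i<length (xs @ [v]). c i \<in> F"
    and comb: "(\<Sum>i<length (xs @ [v]). c i * (xs @ [v]) ! i) = 0"
  let ?n = "length xs"
  have "(\<Sum>i<?n. c i * (xs @ [v]) ! i) = (\<Sum>i<?n. c i * xs ! i)"
    by (rule sum.cong) (auto simp: nth_append)
  then have comb': "(\<Sum>i<?n. c i * xs ! i) + c ?n * v = 0"
    using comb by simp
  have last: "c ?n = 0"
  proof (rule ccontr)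
    assume nz: "c ?n \<noteq> 0"
    let ?d = "\<lambda>i. - c i / c ?n"
    have "v = (\<Sum>i<?n. ?d i * xs ! i)"
      using comb' nz by (simp add: sum_divide_distrib[symmetric] sum_negf field_simps add_eq_0_iff2)
    moreover have "\<forall>i<?n. ?d i \<in> F"
      using cF F by (auto intro!: subfield_uminus subfield_divide)
    ultimately have "v \<in> span_list F xs"
      unfolding span_list_def by (intro CollectI exI[of _ ?d]) simp
    then show False
      using v by contradiction
  qed
  then have "\<forall>i<?n. c i = 0"
    using ind comb' cF unfolding indep_list_def by simp
  then show "\<forall>i<length (xs @ [v]). c i = 0"
    using last by (simp add: less_Suc_eq)
qed

lemma exists_basis:
  fixes F V :: "'a::{field,finite} set"
  assumes F: "is_subfield F" and V: "is_subspace F V"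
  shows "\<exists>xs. indep_list F xs \<and> span_list F xs = V"
proof -
  have extend: "\<exists>ys. indep_list F ys \<and> span_list F ys = V"
    if "indep_list F xs" "set xs \<subseteq> V" for xs
    using that
  proof (induction "card (V - span_list F xs)" arbitrary: xs rule: less_induct)
    case less
    show ?case
    proof (cases "span_list F xs = V")
      case False
      then obtain v where v: "v \<in> V" "v \<notin> span_list F xs"
        using span_list_subset[OF V less.prems(2)] by blast
      have "span_list F xs \<subseteq> span_list F (xs @ [v])" "v \<in> span_list F (xs @ [v])"
        using span_list_snoc_mono[of F xs v] nth_in_span_list[OF F, of "length xs" "xs @ [v]"] F
        by (auto simp: is_subfield_def)
      then have "card (V - span_list F (xs @ [v])) < card (V - span_list F xs)"
        using v by (intro psubset_card_mono) auto
      moreover have "set (xs @ [v]) \<subseteq> V"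
        using less.prems(2) v(1) by simp
      ultimately show ?thesis
        using less.hyps indep_list_snoc[OF F less.prems(1) v(2)] by blast
    qed (use less.prems in blast)
  qed
  show ?thesis
    using extend[of "[]"] by (simp add: indep_list_def)
qed

lemma card_span_list_indep:
  fixes F :: "'a::{field,finite} set"
  assumes F: "is_subfield F" and ind: "indep_list F xs"
  shows "card (span_list F xs) = card F ^ length xs"
proof -
  let ?P = "PiE {..<length xs} (\<lambda>_. F)"
  let ?comb = "\<lambda>c. \<Sum>i<length xs. c i * xs ! i"
  have "span_list F xs = ?comb ` ?P"
  proof
    show "span_list F xs \<subseteq> ?comb ` ?P"
    proof
      fix v assume "v \<in> span_list F xs"
      then obtain c where "\<forall>i<length xs. c i \<in> F" "v = ?comb c"
        unfolding span_list_def by blast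
      then show "v \<in> ?comb ` ?P"
        by (intro image_eqI[of _ _ "restrict c {..<length xs}"]) auto
    qed
  qed (auto simp: span_list_def PiE_def Pi_def)
  moreover have "inj_on ?comb ?P"
  proof (rule inj_onI)
    fix c d assume c: "c \<in> ?P" and d: "d \<in> ?P" and eq: "?comb c = ?comb d"
    have "(\<forall>i<length xs. c i - d i \<in> F) \<longrightarrow> (\<Sum>i<length xs. (c i - d i) * xs ! i) = 0
        \<longrightarrow> (\<forall>i<length xs. c i - d i = 0)"
      using ind unfolding indep_list_def by (rule spec)
    moreover have "(\<Sum>i<length xs. (c i - d i) * xs ! i) = 0"
      using eq by (simp add: sum_subtractf left_diff_distrib)
    moreover have "\<forall>i<length xs. c i - d i \<in> F"
      using c d F by (simp add: PiE_iff subfield_diff)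
    ultimately have "\<forall>i<length xs. c i - d i = 0"
      by blast
    then show "c = d"
      using c d by (intro PiE_ext[OF c d]) simp
  qed
  ultimately show ?thesis
    by (simp add: card_image card_PiE)
qed

lemma card_eq_power_dimK:
  fixes F V :: "'a::{field,finite} set"
  assumes F: "is_subfield F" and V: "is_subspace F V"
  shows "card V = card F ^ dimK F V"
proof -
  obtain xs where xs: "indep_list F xs" "span_list F xs = V"
    using exists_basis[OF F V] by blast
  have "card F ^ d = card F ^ length xs" if "has_dim F V d" for d
    using that xs card_span_list_indep[OF F] unfolding has_dim_def by metis
  moreover have "1 < card F"
    using F card_mono[of F "{0, 1}"] by (simp add: is_subfield_def)
  ultimately have "has_dim F V d \<longleftrightarrow> d = length xs" for d
    using xs unfolding has_dim_def by (metis power_inject_exp)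
  then have "dimK F V = length xs"
    unfolding dimK_def by (intro the_equality) auto
  then show ?thesis
    using card_span_list_indep[OF F xs(1)] xs(2) by simp
qed

lemma adjoin_mem_Fqs_dimK:
  fixes F :: "'a::{field,finite} set"
  assumes F: "is_subfield F" and card_F: "card F = q"
  shows "lam \<in> Fqs q (dimK F (adjoin F lam))"
proof -
  let ?K = "adjoin F lam"
  have K: "is_subfield ?K" "F \<subseteq> ?K" "lam \<in> ?K"
    unfolding adjoin_def is_subfield_def by auto
  have "card ?K = q ^ dimK F ?K"
    using card_eq_power_dimK[OF F subfield_is_subspace[OF K(1,2)]] card_F by simp
  then show ?thesis
    using subfield_power_card[OF K(1,3)] by (simp add: Fqs_def)
qed

lemma span_powers_subset:
  assumes "is_subfield K" "F \<subseteq> K" "lam \<in> K"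
  shows "span_list F (map (\<lambda>i. lam ^ i) [0..<m]) \<subseteq> K"
  using assms by (intro span_list_subset subfield_is_subspace) (auto intro: subfield_power)

lemma one_mem_span_powers:
  assumes "is_subfield F" "0 < m"
  shows "1 \<in> span_list F (map (\<lambda>i. lam ^ i) [0..<m])"
  using nth_in_span_list[OF assms(1), of 0 "map (\<lambda>i. lam ^ i) [0..<m]"] assms(2) by simp

section \<open>Stabilisers of hyperplanes\<close>

lemma span_set_least: "is_subspace K W \<Longrightarrow> A \<subseteq> W \<Longrightarrow> span_set K A \<subseteq> W"
  unfolding span_set_def by blast

lemma subspace_set_plus_scale:
  assumes K: "is_subfield K" and V: "is_subspace K V"
  shows "is_subspace K (set_plus V (scale_set b K))"
  unfolding is_subspace_def
proof (intro conjI ballI)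
  show "0 \<in> set_plus V (scale_set b K)"
    using K V unfolding set_plus_def scale_set_def is_subspace_def is_subfield_def by force
next
  fix x y assume "x \<in> set_plus V (scale_set b K)" "y \<in> set_plus V (scale_set b K)"
  then obtain s c s' c' where "x = s + b * c" "y = s' + b * c'" "s \<in> V" "c \<in> K" "s' \<in> V" "c' \<in> K"
    unfolding set_plus_def scale_set_def by auto
  moreover have "x + y = (s + s') + b * (c + c')"
    using calculation by (simp add: algebra_simps)
  ultimately show "x + y \<in> set_plus V (scale_set b K)"
    using K V unfolding set_plus_def scale_set_def is_subspace_def is_subfield_def by blast
next
  fix a x assume a: "a \<in> K" and "x \<in> set_plus V (scale_set b K)"
  then obtain s c where "x = s + b * c" "s \<in> V" "c \<in> K"
    unfolding set_plus_def scale_set_def by auto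
  moreover have "a * x = a * s + b * (a * c)"
    using calculation by (simp add: algebra_simps)
  ultimately show "a * x \<in> set_plus V (scale_set b K)"
    using a K V unfolding set_plus_def scale_set_def is_subspace_def is_subfield_def by blast
qed

lemma set_plus_scale_eq_UNIV_of_span:
  assumes K: "is_subfield K" and V: "is_subspace K V" and W: "W \<subseteq> K"
    and span: "span_set K (set_plus V (scale_set b W)) = UNIV"
  shows "set_plus V (scale_set b K) = UNIV"
proof -
  have "set_plus V (scale_set b W) \<subseteq> set_plus V (scale_set b K)"
    using W unfolding set_plus_def scale_set_def by blast
  then have "span_set K (set_plus V (scale_set b W)) \<subseteq> set_plus V (scale_set b K)"
    by (rule span_set_least[OF subspace_set_plus_scale[OF K V]])
  then show ?thesis
    using span by blast
qed

lemma scale_set_eq_if_maps_into: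
  fixes S :: "'a::{field,finite} set"
  assumes "x \<noteq> 0" "\<And>s. s \<in> S \<Longrightarrow> x * s \<in> S"
  shows "scale_set x S = S"
proof -
  have "inj_on (\<lambda>s. x * s) S"
    using assms(1) by (auto simp: inj_on_def)
  then have "card (scale_set x S) = card S"
    by (simp add: scale_set_def card_image)
  moreover have "scale_set x S \<subseteq> S"
    using assms(2) by (auto simp: scale_set_def)
  ultimately show ?thesis
    by (intro card_subset_eq) auto
qed

lemma stab_mult_mem: "h \<in> stab V \<Longrightarrow> 0 \<in> V \<Longrightarrow> s \<in> V \<Longrightarrow> h * s \<in> V"
  unfolding stab_def scale_set_def by auto

lemma subfield_subset_stab:
  fixes V :: "'a::{field,finite} set"
  assumes "is_subspace K V"
  shows "K \<subseteq> stab V"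
  using assms scale_set_eq_if_maps_into[of _ V] unfolding stab_def is_subspace_def by auto

lemma stab_eq_if_complement:
  fixes V :: "'a::{field,finite} set"
  assumes K: "is_subfield K" and V: "is_subspace K V" and b: "b \<notin> V"
    and cover: "set_plus V (scale_set b K) = UNIV"
  shows "stab V = K"
proof -
  have "\<exists>c\<in>K. h * b - b * c \<in> V" for h
  proof -
    obtain s c where "h * b = s + b * c" "s \<in> V" "c \<in> K"
      using cover unfolding set_plus_def scale_set_def by blast
    then show ?thesis
      by force
  qed
  then obtain coord where coord: "\<And>h. coord h \<in> K" "\<And>h. h * b - b * coord h \<in> V"
    by metis
  have V0: "0 \<in> V"
    using V by (simp add: is_subspace_def)
  have "inj_on coord (stab V)"
  proof (rule inj_onI, rule ccontr)
    fix h h' assume h: "h \<in> stab V" and h': "h' \<in> stab V" and eq: "coord h = coord h'"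
      and ne: "h \<noteq> h'"
    have "(h - h') * b = (h * b - b * coord h) - (h' * b - b * coord h')"
      using eq by (simp add: algebra_simps)
    then have "(h - h') * b \<in> V"
      using subspace_diff[OF K V coord(2) coord(2)] by simp
    moreover have "scale_set (h - h') V = V"
      using ne by (intro scale_set_eq_if_maps_into)
        (auto simp: left_diff_distrib intro!: subspace_diff[OF K V] stab_mult_mem[OF _ V0] h h')
    ultimately obtain v where "v \<in> V" "(h - h') * b = (h - h') * v"
      unfolding scale_set_def by (metis image_iff)
    then show False
      using b ne by simp
  qed
  then have "card (stab V) \<le> card K"
    using coord(1) by (intro card_inj_on_le) auto
  moreover have "K \<subseteq> stab V"
    using subfield_subset_stab[OF V] .
  ultimately show ?thesis
    using card_mono[of "stab V" K] card_subset_eq[of "stab V" K] by simp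
qed

theorem lemma4p8:
  fixes lam b :: "'a::{field,finite}"
    and Sbar :: "'a set"
    and q n t l m k r :: nat
  assumes q_pp: "\<exists>p e. prime p \<and> e > 0 \<and> q = p ^ e"
    and n_pos: "n > 0"
    and card_field: "card (UNIV :: 'a set) = q ^ n"
    and lam_notin: "lam \<notin> Fqs q 1"
    and t_def: "t = dimK (Fqs q 1) (adjoin (Fqs q 1) lam)"
    and Sbar_sub: "is_subspace (Fqs q t) Sbar"
    and Sbar_dim: "has_dim (Fqs q t) Sbar l"
    and l_pos: "l > 0"
    and b_nz: "b \<noteq> 0"
    and b_int: "Fqs q t \<inter> scale_set b Sbar = {0}"
    and m_bounds: "0 < m" "m < t"
    and k_def: "k = t * l + m"
    and k_bounds: "t + 1 \<le> k" "k \<le> n"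
    and direct: "Sbar \<inter> scale_set b (span_list (Fqs q 1) (map (\<lambda>i. lam ^ i) [0..<m])) = {0}"
    and Y_full: "span_set (Fqs q t)
        (set_plus Sbar (scale_set b (span_list (Fqs q 1) (map (\<lambda>i. lam ^ i) [0..<m])))) = UNIV"
    and m_ineq: "2 * m + 1 \<ge> t"
    and r_def: "r = 2 * m + t * (l - 1)"
    and fws: "is_FWS (Fqs q 1) r
        (set_plus Sbar (scale_set b (span_list (Fqs q 1) (map (\<lambda>i. lam ^ i) [0..<m]))))"
  shows "stab Sbar = Fqs q t"
proof -
  obtain p e where pe: "prime p" "0 < e" "q = p ^ e"
    using q_pp by blast
  then have "CHAR('a) = p"
    using CHAR_eq_of_card_prime_power[of p "e * n"] card_field n_pos by (simp add: power_mult)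
  then have subfield_Fqs: "is_subfield (Fqs q s :: 'a set)" for s
    using pe by (simp add: Fqs_subfield)
  have "2 \<le> q"
    using one_less_power[OF prime_gt_1_nat[OF pe(1)] pe(2)] pe(3) by simp
  then have "lam \<in> Fqs q t"
    using adjoin_mem_Fqs_dimK[OF subfield_Fqs card_Fqs_1] n_pos card_field t_def by simp
  then have "set_plus Sbar (scale_set b (Fqs q t)) = UNIV"
    using set_plus_scale_eq_UNIV_of_span[OF subfield_Fqs Sbar_sub
        span_powers_subset[OF subfield_Fqs Fqs_1_subset] Y_full]
    by simp
  moreover have "b \<notin> Sbar"
    using direct b_nz one_mem_span_powers[OF subfield_Fqs m_bounds(1), where lam = lam]
    unfolding scale_set_def by force
  ultimately show ?thesis
    using stab_eq_if_complement[OF subfield_Fqs Sbar_sub] by blast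
qed

end
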